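(* Assume (RHS.1), (RHS.2), (BC.1), (BC.2), and, if (RHS.2b) holds, that condition (M.1) holds. If $u_{\mathfrak h}\in\mathbb V_h$ solves the discrete problem, then $$\|u_{\mathfrak h}\|_{L^\infty(\Omega_h)}\le C\|f\|_{L^\infty(\Omega_h)}+\max_{z\in\mathcal N_h^b}|\tilde g_\varepsilon(z)|,$$ where $C$ depends only on $\Omega$ and is independent of $\mathfrak h=(h,\varepsilon,\theta)$.
   Context: Setting: $\Omega\subset\mathbb R^d$ ($d\ge1$) is a bounded domain with continuous boundary. For $r>0$, $\Omega^{(r)}=\{x\in\Omega:\operatorname{dist}(x,\partial\Omega)>r\}$. $\{\mathcal T_h\}_{h>0}$ is a family of meshes of closed simplices, $h=\max_T\operatorname{diam}T$, $\Omega_h$ the interior of the union of the simplices, with $\Omega^{(h)}\subset\Omega_h\subset\Omega$; $\mathcal N_h$ the set of vertices. $\mathbb V_h$: continuous piecewise linear functions on $\mathcal T_h$, hat basis $\{\hat\varphi_z\}$, Lagrange interpolant $\mathcal I_h$. Parameters $\mathfrak h=(h,\varepsilon,\theta)$, $\varepsilon\in[h,\operatorname{diam}\Omega]$, $0<\theta\le1$. $\mathcal N_h^I=\mathcal N_h\cap\Omega^{(2\varepsilon)}$, $\mathcal N_h^b=\mathcal N_h\setminus\mathcal N_h^I$. $\mathbb S_\theta$: finite symmetric subset of the unit sphere $\mathbb S$ such that each $v\in\mathbb S$ has $v_\theta\in\mathbb S_\theta$ with $|v-v_\theta|\le\theta$. For $z\in\mathcal N_h^I$: $\mathcal N_{\mathfrak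 h}(z)=\{z\}\cup\{z+\varepsilon v_\theta:v_\theta\in\mathbb S_\theta\}$, $-\Delta^\diamond_{\infty,\mathfrak h}w(z)=\varepsilon^{-2}\big(2w(z)-\max_{x\in\mathcal N_{\mathfrak h}(z)}\mathcal I_hw(x)-\min_{x\in\mathcal N_{\mathfrak h}(z)}\mathcal I_hw(x)\big)$, $\widetilde{\mathcal N}_{\mathfrak h}(z)=\{z\}\cup\{z'\in\mathcal N_h:\exists v_\theta\in\mathbb S_\theta,\ \hat\varphi_{z'}(z+\varepsilon v_\theta)>0\}$. Assumptions: (RHS.1) $f\in C(\Omega)\cap L^\infty(\Omega)$. (RHS.2) either (RHS.2a) $\sup_\Omega f<0$ or $\inf_\Omega f>0$, or (RHS.2b) $f\equiv0$. (BC.1) $g\in C(\partial\Omega)$. (BC.2) for every $\varepsilon>0$ a function $\tilde g_\varepsilon\in C(\overline\Omega)$ is given such that, if $g\in C^{0,\alpha}(\partial\Omega)$ for some $\alpha\in[0,1]$, then $\tilde g_\varepsilon\in C^{0,\alpha}(\overline\Omega)$ and $\|g-\tilde g_\varepsilon\|_{L^\infty(\partial\Omega)}\le C\varepsilon^\alpha$. (M.1) for every nonempty $S\subset\mathcal N_h^I$ there are $z\in S$, $z'\in\mathcal N_h\setminus S$ with $z'\in\widetilde{\mathcal N}_{\mathfrak h}(z)$. Discrete problem: find $u_{\mathfrak h}\in\mathbb V_h$ with $-\Delta^\diamond_{\infty,\mathfrak h}u_{\mathfrak h}(z)=f(z)$ for $z\in\mathcal N_h^I$ and $u_{\mathfrak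 h}(z)=\tilde g_\varepsilon(z)$ for $z\in\mathcal N_h^b$. *)

theory Defs
  imports "HOL-Analysis.Analysis"
begin

definition inner_set :: "'a::euclidean_space set \<Rightarrow> real \<Rightarrow> 'a set" where
  "inner_set Om r = {x \<in> Om. infdist x (frontier Om) > r}"

text \<open>Continuous boundary: locally, in a suitably rotated coordinate system
  (unit normal direction n, hyperplane orthogonal to n), Omega is the strict
  subgraph of a continuous function.\<close>
definition continuous_boundary :: "'a::euclidean_space set \<Rightarrow> bool" where
  "continuous_boundary Om \<longleftrightarrow>
     (\<forall>x\<in>frontier Om. \<exists>n r (phi :: 'a \<Rightarrow> real).
        norm n = 1 \<and> r > 0 \<and> continuous_on UNIV phi \<and>
        (\<forall>y\<in>ball x r. y \<in> Om \<longleftrightarrow>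
            (y - x) \<bullet> n < phi ((y - x) - ((y - x) \<bullet> n) *\<^sub>R n)))"

text \<open>A mesh is a finite nonempty set of simplices, each given by its vertex set
  (DIM+1 affinely independent points); the closed simplex is its convex hull.\<close>
definition simplicial_mesh :: "'a::euclidean_space set set \<Rightarrow> bool" where
  "simplicial_mesh T \<longleftrightarrow> finite T \<and> T \<noteq> {} \<and>
     (\<forall>K\<in>T. finite K \<and> card K = DIM('a) + 1 \<and> \<not> affine_dependent K) \<and>
     (\<forall>K\<in>T. \<forall>K'\<in>T. convex hull K \<inter> convex hull K' = convex hull (K \<inter> K'))"

definition mesh_union :: "'a::euclidean_space set set \<Rightarrow> 'a set" where
  "mesh_union T = (\<Union>K\<in>T. convex hull K)"

definition mesh_dom :: "'a::euclidean_space set set \<Rightarrow> 'a set" where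
  "mesh_dom T = interior (mesh_union T)"

definition nodes :: "'a::euclidean_space set set \<Rightarrow> 'a set" where
  "nodes T = \<Union>T"

definition meshsize :: "'a::euclidean_space set set \<Rightarrow> real" where
  "meshsize T = Max ((\<lambda>K. diameter (convex hull K)) ` T)"

text \<open>V_h: continuous piecewise linear functions on the mesh (extended by 0
  outside the union of the simplices, so that they are uniquely determined).\<close>
definition Vh :: "'a::euclidean_space set set \<Rightarrow> ('a \<Rightarrow> real) set" where
  "Vh T = {w. continuous_on (mesh_union T) w \<and>
              (\<forall>K\<in>T. \<exists>a b. \<forall>x\<in>convex hull K. w x = a \<bullet> x + b) \<and>
              (\<forall>x. x \<notin> mesh_union T \<longrightarrow> w x = 0)}"

definition hat :: "'a::euclidean_space set set \<Rightarrow> 'a \<Rightarrow> 'a \<Rightarrow> real" where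
  "hat T z = (THE phi. phi \<in> Vh T \<and>
                 (\<forall>y\<in>nodes T. phi y = (if y = z then 1 else 0)))"

definition interp :: "'a::euclidean_space set set \<Rightarrow> ('a \<Rightarrow> real) \<Rightarrow> 'a \<Rightarrow> real" where
  "interp T w = (\<lambda>x. \<Sum>z\<in>nodes T. w z * hat T z x)"

definition sphere_net :: "real \<Rightarrow> 'a::euclidean_space set \<Rightarrow> bool" where
  "sphere_net \<theta> S \<longleftrightarrow> finite S \<and> S \<subseteq> sphere 0 1 \<and> (\<forall>v\<in>S. - v \<in> S) \<and>
     (\<forall>v\<in>sphere 0 1. \<exists>v'\<in>S. norm (v - v') \<le> \<theta>)"

definition inodes :: "'a::euclidean_space set \<Rightarrow> 'a set set \<Rightarrow> real \<Rightarrow> 'a set" where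
  "inodes Om T \<epsilon> = nodes T \<inter> inner_set Om (2 * \<epsilon>)"

definition bnodes :: "'a::euclidean_space set \<Rightarrow> 'a set set \<Rightarrow> real \<Rightarrow> 'a set" where
  "bnodes Om T \<epsilon> = nodes T - inodes Om T \<epsilon>"

definition stencil :: "real \<Rightarrow> 'a::euclidean_space set \<Rightarrow> 'a \<Rightarrow> 'a set" where
  "stencil \<epsilon> S z = insert z ((\<lambda>v. z + \<epsilon> *\<^sub>R v) ` S)"

definition neg_disc_inf_lap ::
  "'a::euclidean_space set set \<Rightarrow> real \<Rightarrow> 'a set \<Rightarrow> ('a \<Rightarrow> real) \<Rightarrow> 'a \<Rightarrow> real" where
  "neg_disc_inf_lap T \<epsilon> S w z =
     (2 * w z - Max (interp T w ` stencil \<epsilon> S z) - Min (interp T w ` stencil \<epsilon> S z)) / \<epsilon>\<^sup>2"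

definition ext_stencil :: "'a::euclidean_space set set \<Rightarrow> real \<Rightarrow> 'a set \<Rightarrow> 'a \<Rightarrow> 'a set" where
  "ext_stencil T \<epsilon> S z =
     insert z {z' \<in> nodes T. \<exists>v\<in>S. hat T z' (z + \<epsilon> *\<^sub>R v) > 0}"

definition cond_M1 :: "'a::euclidean_space set \<Rightarrow> 'a set set \<Rightarrow> real \<Rightarrow> 'a set \<Rightarrow> bool" where
  "cond_M1 Om T \<epsilon> S \<longleftrightarrow>
     (\<forall>A. A \<subseteq> inodes Om T \<epsilon> \<and> A \<noteq> {} \<longrightarrow>
        (\<exists>z\<in>A. \<exists>z'\<in>nodes T - A. z' \<in> ext_stencil T \<epsilon> S z))"

definition holder_on :: "real \<Rightarrow> 'a::metric_space set \<Rightarrow> ('a \<Rightarrow> real) \<Rightarrow> bool" where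
  "holder_on \<alpha> S g \<longleftrightarrow> continuous_on S g \<and>
     (\<exists>L. \<forall>x\<in>S. \<forall>y\<in>S. \<bar>g x - g y\<bar> \<le> L * dist x y powr \<alpha>)"

text \<open>Sup norm on a set (equals the L-infinity norm for the continuous
  functions to which it is applied, on open sets).\<close>
definition supnorm_on :: "'a set \<Rightarrow> ('a \<Rightarrow> real) \<Rightarrow> real" where
  "supnorm_on A w = (SUP x\<in>A. \<bar>w x\<bar>)"

end

theory Submission
  imports Defs
begin

(* Comparison with a concave paraboloid. Let G bound the boundary data, let A exceed sup |f| and
   put R = 2 diam Omega, so that every stencil point lies within R of a fixed node x0. The barrier
   W x = G + A R^2 - A |x - x0|^2 is concave, so its interpolant lies below it, and on a symmetric
   stencil the reflected pair z +- eps v gives -Delta W(z) >= A. If u - W had a positive maximum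
   over the nodes, it would be attained at an interior node z0 (on boundary nodes u <= G <= W), and
   the discrete operator, being monotone in the off-centre values, would give
   A <= -Delta W(z0) <= -Delta u(z0) = f(z0) < A. Hence u <= G + A R^2 at the nodes, likewise
   for -u, and a function of V_h is bounded on Omega_h by its nodal values. Letting A decrease to
   sup |f| gives C = (2 diam Omega)^2. Neither (RHS.2) nor (M.1) nor any regularity of the data or
   of the boundary is needed for this bound. *)

lemma simplicial_meshD:
  fixes T :: "'a::euclidean_space set set"
  assumes "simplicial_mesh T"
  shows "finite T" "T \<noteq> {}"
    and "K \<in> T \<Longrightarrow> finite K" "K \<in> T \<Longrightarrow> card K = DIM('a) + 1"
    and "K \<in> T \<Longrightarrow> \<not> affine_dependent K"
    and "K \<in> T \<Longrightarrow> K' \<in> T \<Longrightarrow> convex hull K \<inter> convex hull K' = convex hull (K \<inter> K')"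
  using assms unfolding simplicial_mesh_def by auto

lemma finite_nodes: "simplicial_mesh T \<Longrightarrow> finite (nodes T)"
  unfolding nodes_def using simplicial_meshD(1,3) by blast

lemma nodes_nonempty:
  assumes "simplicial_mesh T"
  shows "nodes T \<noteq> {}"
proof -
  obtain K where K: "K \<in> T" using simplicial_meshD(2)[OF assms] by blast
  then have "K \<noteq> {}" using simplicial_meshD(4)[OF assms] by force
  then show ?thesis using K unfolding nodes_def by blast
qed

lemma simplex_subset_nodes: "K \<in> T \<Longrightarrow> K \<subseteq> nodes T"
  unfolding nodes_def by blast

lemma nodes_subset_mesh_union: "nodes T \<subseteq> mesh_union T"
  unfolding nodes_def mesh_union_def by (auto simp: hull_inc)

lemma mesh_union_convex_comb:
  assumes "simplicial_mesh T" "x \<in> mesh_union T"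
  obtains K \<mu> where "K \<in> T" "\<forall>v\<in>K. 0 \<le> \<mu> v" "sum \<mu> K = 1" "x = (\<Sum>v\<in>K. \<mu> v *\<^sub>R v)"
proof -
  obtain K where K: "K \<in> T" "x \<in> convex hull K"
    using assms(2) unfolding mesh_union_def by blast
  then show ?thesis
    using that convex_hull_finite[OF simplicial_meshD(3)[OF assms(1) K(1)]] by force
qed

lemma interior_simplex_nonempty:
  assumes "simplicial_mesh T" "K \<in> T"
  shows "interior (convex hull K) \<noteq> {}"
  using interior_convex_hull_eq_empty[of K] simplicial_meshD(4,5)[OF assms] by simp

lemma interior_simplex_subset_mesh_dom: "K \<in> T \<Longrightarrow> interior (convex hull K) \<subseteq> mesh_dom T"
  unfolding mesh_dom_def mesh_union_def by (rule interior_mono) blast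

lemma mesh_dom_nonempty:
  assumes "simplicial_mesh T"
  shows "mesh_dom T \<noteq> {}"
proof -
  obtain K where "K \<in> T" using simplicial_meshD(2)[OF assms] by blast
  then show ?thesis
    using interior_simplex_nonempty[OF assms] interior_simplex_subset_mesh_dom by blast
qed

lemma mesh_union_subset_closure_mesh_dom:
  assumes "simplicial_mesh T"
  shows "mesh_union T \<subseteq> closure (mesh_dom T)"
proof
  fix x assume "x \<in> mesh_union T"
  then obtain K where K: "K \<in> T" "x \<in> convex hull K" unfolding mesh_union_def by blast
  have "x \<in> closure (convex hull K)" using K(2) closure_subset by blast
  also have "\<dots> = closure (interior (convex hull K))"
    using convex_closure_interior[OF convex_convex_hull interior_simplex_nonempty[OF assms K(1)]]
    by simp
  also have "\<dots> \<subseteq> closure (mesh_dom T)"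
    by (rule closure_mono[OF interior_simplex_subset_mesh_dom[OF K(1)]])
  finally show "x \<in> closure (mesh_dom T)" .
qed

lemma meshsize_pos:
  fixes T :: "'a::euclidean_space set set"
  assumes sm: "simplicial_mesh T"
  shows "0 < meshsize T"
proof -
  obtain K where K: "K \<in> T" using simplicial_meshD(2)[OF sm] by blast
  have "finite K" "card K = DIM('a) + 1" using simplicial_meshD(3,4)[OF sm K] by auto
  then have "\<not> card K \<le> Suc 0" using DIM_positive[where 'a = 'a] by linarith
  then obtain a b where ab: "a \<in> K" "b \<in> K" "a \<noteq> b"
    using card_le_Suc0_iff_eq[OF \<open>finite K\<close>] by blast
  have "dist a b \<le> diameter (convex hull K)"
    using ab \<open>finite K\<close>
    by (intro diameter_bounded_bound) (auto simp: bounded_convex_hull finite_imp_bounded hull_inc)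
  also have "\<dots> \<le> meshsize T"
    unfolding meshsize_def using simplicial_meshD(1)[OF sm] K by simp
  moreover have "0 < dist a b" using ab(3) by simp
  ultimately show ?thesis by linarith
qed

lemma affine_convex_comb:
  fixes a :: "'a::real_inner"
  assumes "sum \<mu> F = 1"
  shows "a \<bullet> (\<Sum>v\<in>F. \<mu> v *\<^sub>R v) + b = (\<Sum>v\<in>F. \<mu> v * (a \<bullet> v + b))"
proof -
  have "(\<Sum>v\<in>F. \<mu> v * (a \<bullet> v + b)) = a \<bullet> (\<Sum>v\<in>F. \<mu> v *\<^sub>R v) + (\<Sum>v\<in>F. \<mu> v) * b"
    by (simp add: algebra_simps sum.distrib inner_sum_right sum_distrib_left)
  then show ?thesis using assms by simp
qed

lemma affine_eq_on_convex_hull: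
  fixes a a' :: "'a::euclidean_space"
  assumes "finite F" "\<And>v. v \<in> F \<Longrightarrow> a \<bullet> v + b = a' \<bullet> v + b'" "x \<in> convex hull F"
  shows "a \<bullet> x + b = a' \<bullet> x + b'"
proof -
  obtain \<mu> where \<mu>: "sum \<mu> F = 1" "x = (\<Sum>v\<in>F. \<mu> v *\<^sub>R v)"
    using assms(3) unfolding convex_hull_finite[OF assms(1)] by blast
  show ?thesis
    using assms(2) by (simp add: \<mu> affine_convex_comb cong: sum.cong)
qed

lemma affine_interpolation_exists:
  fixes K :: "'a::euclidean_space set"
  assumes "\<not> affine_dependent K"
  shows "\<exists>a b. \<forall>v\<in>K. a \<bullet> v + b = c v"
proof (cases "K = {}")
  case False
  then obtain z where z: "z \<in> K" by blast
  have "independent ((\<lambda>x. - z + x) ` (K - {z}))"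
    using assms affine_dependent_iff_dependent2[OF z] by blast
  then have "\<exists>g :: 'a \<Rightarrow> real. linear g \<and> (\<forall>x\<in>(\<lambda>x. - z + x) ` (K - {z}). g x = c (z + x) - c z)"
    by (rule linear_independent_extend)
  then obtain g :: "'a \<Rightarrow> real"
    where g: "linear g" "\<forall>x\<in>(\<lambda>x. - z + x) ` (K - {z}). g x = c (z + x) - c z"
    by blast
  define a where "a = adjoint g 1"
  have ga: "g x = a \<bullet> x" for x
    using adjoint_works[OF g(1), of x 1] unfolding a_def by (simp add: inner_commute)
  have "a \<bullet> v + (c z - a \<bullet> z) = c v" if "v \<in> K" for v
  proof (cases "v = z")
    case False
    then have "- z + v \<in> (\<lambda>x. - z + x) ` (K - {z})" using that by blast
    then have "g (- z + v) = c (z + (- z + v)) - c z" using g(2) by blast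
    then show ?thesis by (simp add: ga inner_diff_right)
  qed simp
  then show ?thesis by blast
qed simp

lemma Vh_convex_comb:
  assumes "w \<in> Vh T" "K \<in> T" "\<forall>v\<in>K. 0 \<le> \<mu> v" "sum \<mu> K = 1"
  shows "w (\<Sum>v\<in>K. \<mu> v *\<^sub>R v) = (\<Sum>v\<in>K. \<mu> v * w v)"
proof -
  obtain a b where ab: "\<forall>x\<in>convex hull K. w x = a \<bullet> x + b"
    using assms(1,2) unfolding Vh_def by blast
  have "finite K" using assms(4) sum.infinite by fastforce
  then have "(\<Sum>v\<in>K. \<mu> v *\<^sub>R v) \<in> convex hull K"
    using assms(3,4) by (intro convex_sum) (auto simp: hull_inc)
  then have "w (\<Sum>v\<in>K. \<mu> v *\<^sub>R v) = (\<Sum>v\<in>K. \<mu> v * (a \<bullet> v + b))"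
    using ab affine_convex_comb[OF assms(4)] by simp
  also have "\<dots> = (\<Sum>v\<in>K. \<mu> v * w v)"
    using ab by (simp add: hull_inc)
  finally show ?thesis .
qed

lemma Vh_eqI:
  assumes "simplicial_mesh T" "\<phi> \<in> Vh T" "\<psi> \<in> Vh T" "\<And>v. v \<in> nodes T \<Longrightarrow> \<phi> v = \<psi> v"
  shows "\<phi> = \<psi>"
proof
  fix x
  show "\<phi> x = \<psi> x"
  proof (cases "x \<in> mesh_union T")
    case True
    then obtain K \<mu> where K: "K \<in> T" "\<forall>v\<in>K. 0 \<le> \<mu> v" "sum \<mu> K = 1" "x = (\<Sum>v\<in>K. \<mu> v *\<^sub>R v)"
      using mesh_union_convex_comb[OF assms(1)] by blast
    have "(\<Sum>v\<in>K. \<mu> v * \<phi> v) = (\<Sum>v\<in>K. \<mu> v * \<psi> v)"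
      using assms(4) simplex_subset_nodes[OF K(1)] by (intro sum.cong) auto
    then show ?thesis
      using Vh_convex_comb[OF assms(2) K(1-3)] Vh_convex_comb[OF assms(3) K(1-3)] K(4) by simp
  next
    case False
    then show ?thesis using assms(2,3) unfolding Vh_def by simp
  qed
qed

lemma Vh_gluing:
  fixes T :: "'a::euclidean_space set set"
  assumes sm: "simplicial_mesh T"
    and agree: "\<And>K K' x. K \<in> T \<Longrightarrow> K' \<in> T \<Longrightarrow> x \<in> convex hull K \<Longrightarrow> x \<in> convex hull K'
                  \<Longrightarrow> a K \<bullet> x + b K = a K' \<bullet> x + b K'"
  obtains \<phi> where "\<phi> \<in> Vh T" "\<And>K x. K \<in> T \<Longrightarrow> x \<in> convex hull K \<Longrightarrow> \<phi> x = a K \<bullet> x + b K"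
proof -
  define pick where "pick x = (SOME K. K \<in> T \<and> x \<in> convex hull K)" for x
  define \<phi> where "\<phi> x = (if x \<in> mesh_union T then a (pick x) \<bullet> x + b (pick x) else 0)" for x
  have \<phi>K: "\<phi> x = a K \<bullet> x + b K" if "K \<in> T" "x \<in> convex hull K" for K x
  proof -
    have "pick x \<in> T \<and> x \<in> convex hull (pick x)"
      unfolding pick_def by (rule someI[of _ K]) (use that in blast)
    moreover have "x \<in> mesh_union T" using that unfolding mesh_union_def by blast
    ultimately show ?thesis using agree[of "pick x" K x] that unfolding \<phi>_def by simp
  qed
  have "\<phi> \<in> Vh T"
    unfolding Vh_def
  proof (intro CollectI conjI allI impI ballI)
    show "continuous_on (mesh_union T) \<phi>"
      unfolding mesh_union_def
    proof (rule continuous_on_closed_Union)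
      show "finite T" by (rule simplicial_meshD(1)[OF sm])
      fix K assume K: "K \<in> T"
      show "closed (convex hull K)"
        using simplicial_meshD(3)[OF sm K]
        by (simp add: compact_imp_closed finite_imp_compact_convex_hull)
      have "continuous_on (convex hull K) (\<lambda>x. a K \<bullet> x + b K)" by (intro continuous_intros)
      then show "continuous_on (convex hull K) \<phi>"
        using \<phi>K[OF K] continuous_on_cong by force
    qed
  next
    fix K assume "K \<in> T"
    then show "\<exists>a b. \<forall>x\<in>convex hull K. \<phi> x = a \<bullet> x + b" using \<phi>K by blast
  next
    fix x assume "x \<notin> mesh_union T"
    then show "\<phi> x = 0" unfolding \<phi>_def by simp
  qed
  then show ?thesis using that \<phi>K by blast
qed

lemma Vh_nodal_interpolant_exists:
  fixes T :: "'a::euclidean_space set set"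
  assumes sm: "simplicial_mesh T"
  shows "\<exists>\<phi>\<in>Vh T. \<forall>v\<in>nodes T. \<phi> v = c v"
proof -
  have "\<forall>K\<in>T. \<exists>a b. \<forall>v\<in>K. a \<bullet> v + b = c v"
    using affine_interpolation_exists simplicial_meshD(5)[OF sm] by blast
  then have "\<exists>a. \<forall>K\<in>T. \<exists>b. \<forall>v\<in>K. a K \<bullet> v + b = c v" by (rule bchoice)
  then obtain a where "\<forall>K\<in>T. \<exists>b. \<forall>v\<in>K. a K \<bullet> v + b = c v" ..
  then have "\<exists>b. \<forall>K\<in>T. \<forall>v\<in>K. a K \<bullet> v + b K = c v" by (rule bchoice)
  then obtain b where ab: "\<forall>K\<in>T. \<forall>v\<in>K. a K \<bullet> v + b K = c v" ..
  have "a K \<bullet> x + b K = a K' \<bullet> x + b K'"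
    if "K \<in> T" "K' \<in> T" "x \<in> convex hull K" "x \<in> convex hull K'" for K K' x
  proof (rule affine_eq_on_convex_hull)
    show "finite (K \<inter> K')" using simplicial_meshD(3)[OF sm that(1)] by simp
    show "a K \<bullet> v + b K = a K' \<bullet> v + b K'" if "v \<in> K \<inter> K'" for v
      using ab \<open>K \<in> T\<close> \<open>K' \<in> T\<close> that by simp
    show "x \<in> convex hull (K \<inter> K')"
      using simplicial_meshD(6)[OF sm that(1,2)] that(3,4) by blast
  qed
  then obtain \<phi> where \<phi>: "\<phi> \<in> Vh T" "\<And>K x. K \<in> T \<Longrightarrow> x \<in> convex hull K \<Longrightarrow> \<phi> x = a K \<bullet> x + b K"
    using Vh_gluing[OF sm] by blast
  have "\<phi> v = c v" if v: "v \<in> nodes T" for v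
  proof -
    obtain K where K: "K \<in> T" "v \<in> K" using v unfolding nodes_def by blast
    then show ?thesis using \<phi>(2)[OF K(1) hull_inc[OF K(2)]] ab by simp
  qed
  then show ?thesis using \<phi>(1) by blast
qed

lemma hat_nodal_basis:
  assumes sm: "simplicial_mesh T"
  shows "hat T z \<in> Vh T" and "y \<in> nodes T \<Longrightarrow> hat T z y = (if y = z then 1 else 0)"
proof -
  have "\<exists>!\<phi>. \<phi> \<in> Vh T \<and> (\<forall>y\<in>nodes T. \<phi> y = (if y = z then 1 else 0))"
  proof (rule ex_ex1I)
    show "\<exists>\<phi>. \<phi> \<in> Vh T \<and> (\<forall>y\<in>nodes T. \<phi> y = (if y = z then 1 else 0))"
      using Vh_nodal_interpolant_exists[OF sm, of "\<lambda>y. if y = z then 1 else 0"] by blast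
  qed (use Vh_eqI[OF sm] in auto)
  then have "hat T z \<in> Vh T \<and> (\<forall>y\<in>nodes T. hat T z y = (if y = z then 1 else 0))"
    unfolding hat_def by (rule theI')
  then show "hat T z \<in> Vh T" and "y \<in> nodes T \<Longrightarrow> hat T z y = (if y = z then 1 else 0)"
    by auto
qed

lemma Vh_lincomb:
  assumes "\<And>z. z \<in> N \<Longrightarrow> \<phi> z \<in> Vh T"
  shows "(\<lambda>x. \<Sum>z\<in>N. c z * \<phi> z x) \<in> Vh T"
  unfolding Vh_def
proof (intro CollectI conjI allI impI ballI)
  show "continuous_on (mesh_union T) (\<lambda>x. \<Sum>z\<in>N. c z * \<phi> z x)"
    using assms unfolding Vh_def by (intro continuous_intros) auto
next
  fix K assume K: "K \<in> T"
  have "\<forall>z\<in>N. \<exists>a b. \<forall>x\<in>convex hull K. \<phi> z x = a \<bullet> x + b"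
    using assms K unfolding Vh_def by blast
  then obtain a b where ab: "\<And>z x. z \<in> N \<Longrightarrow> x \<in> convex hull K \<Longrightarrow> \<phi> z x = a z \<bullet> x + b z"
    by metis
  have "(\<Sum>z\<in>N. c z * \<phi> z x) = (\<Sum>z\<in>N. c z *\<^sub>R a z) \<bullet> x + (\<Sum>z\<in>N. c z * b z)"
    if "x \<in> convex hull K" for x
    using ab that by (simp add: inner_sum_left distrib_left sum.distrib)
  then show "\<exists>a b. \<forall>x\<in>convex hull K. (\<Sum>z\<in>N. c z * \<phi> z x) = a \<bullet> x + b" by blast
next
  fix x assume "x \<notin> mesh_union T"
  then show "(\<Sum>z\<in>N. c z * \<phi> z x) = 0" using assms unfolding Vh_def by simp
qed

lemma interp_in_Vh: "simplicial_mesh T \<Longrightarrow> interp T c \<in> Vh T"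
  unfolding interp_def by (rule Vh_lincomb) (rule hat_nodal_basis)

lemma interp_nodes:
  assumes "simplicial_mesh T" "y \<in> nodes T"
  shows "interp T c y = c y"
proof -
  have "interp T c y = (\<Sum>z\<in>nodes T. if z = y then c z else 0)"
    unfolding interp_def using assms by (intro sum.cong) (auto simp: hat_nodal_basis(2))
  also have "\<dots> = c y" using assms by (simp add: finite_nodes)
  finally show ?thesis .
qed

lemma interp_diff: "interp T (\<lambda>x. u x - w x) y = interp T u y - interp T w y"
  unfolding interp_def by (simp add: left_diff_distrib sum_subtractf)

lemma interp_uminus: "interp T (\<lambda>x. - u x) y = - interp T u y"
  unfolding interp_def by (simp add: sum_negf)

lemma Vh_mem_convex:
  assumes sm: "simplicial_mesh T" and "w \<in> Vh T" "convex C" "0 \<in> C"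
    and "\<And>v. v \<in> nodes T \<Longrightarrow> w v \<in> C"
  shows "w x \<in> C"
proof (cases "x \<in> mesh_union T")
  case True
  then obtain K \<mu> where K: "K \<in> T" "\<forall>v\<in>K. 0 \<le> \<mu> v" "sum \<mu> K = 1" "x = (\<Sum>v\<in>K. \<mu> v *\<^sub>R v)"
    using mesh_union_convex_comb[OF sm] by blast
  have "w x = (\<Sum>v\<in>K. \<mu> v *\<^sub>R w v)"
    using Vh_convex_comb[OF assms(2) K(1-3)] K(4) by simp
  also have "\<dots> \<in> C"
    using K(2,3) simplicial_meshD(3)[OF sm K(1)] simplex_subset_nodes[OF K(1)] assms(3,5)
    by (intro convex_sum) auto
  finally show ?thesis .
next
  case False
  then show ?thesis using assms(2,4) unfolding Vh_def by simp
qed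

lemma supnorm_on_Vh_le:
  assumes sm: "simplicial_mesh T" and "w \<in> Vh T" and nodal: "\<And>v. v \<in> nodes T \<Longrightarrow> \<bar>w v\<bar> \<le> M"
  shows "supnorm_on (mesh_dom T) w \<le> M"
proof -
  obtain v where "v \<in> nodes T" using nodes_nonempty[OF sm] by blast
  then have "0 \<le> M" using nodal[of v] by linarith
  have range: "w x \<in> {-M..M}" for x
  proof (rule Vh_mem_convex[OF sm assms(2)])
    show "w v \<in> {-M..M}" if "v \<in> nodes T" for v using nodal[OF that] by (simp add: abs_le_iff)
  qed (use \<open>0 \<le> M\<close> in auto)
  have "\<bar>w x\<bar> \<le> M" for x using range[of x] by (simp add: abs_le_iff)
  then show ?thesis
    unfolding supnorm_on_def by (intro cSUP_least mesh_dom_nonempty[OF sm])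
qed

lemma abs_le_supnorm_on:
  assumes "x \<in> A" "bounded (f ` A)"
  shows "\<bar>f x\<bar> \<le> supnorm_on A f"
proof -
  obtain B where "\<forall>y\<in>A. \<bar>f y\<bar> \<le> B" using assms(2) by (auto simp: bounded_iff)
  then have "bdd_above ((\<lambda>y. \<bar>f y\<bar>) ` A)" by (intro bdd_aboveI2) blast
  then show ?thesis unfolding supnorm_on_def by (rule cSUP_upper[OF assms(1)])
qed

section \<open>The paraboloid barrier\<close>

lemma norm_convex_comb_sq_le:
  fixes xc :: "'a::real_inner"
  assumes "\<forall>v\<in>K. 0 \<le> \<mu> v" "sum \<mu> K = 1"
  shows "(norm ((\<Sum>v\<in>K. \<mu> v *\<^sub>R v) - xc))\<^sup>2 \<le> (\<Sum>v\<in>K. \<mu> v * (norm (v - xc))\<^sup>2)"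
proof -
  define q where "q = (\<Sum>v\<in>K. \<mu> v *\<^sub>R (v - xc))"
  have q: "(\<Sum>v\<in>K. \<mu> v *\<^sub>R v) - xc = q"
    unfolding q_def using assms(2)
    by (simp add: scaleR_diff_right sum_subtractf flip: scaleR_sum_left)
  have cross: "(\<Sum>v\<in>K. \<mu> v * ((v - xc) \<bullet> q)) = q \<bullet> q"
    by (simp add: q_def inner_sum_left)
  have "0 \<le> (\<Sum>v\<in>K. \<mu> v * (norm ((v - xc) - q))\<^sup>2)"
    using assms(1) by (intro sum_nonneg) auto
  also have "\<dots> = (\<Sum>v\<in>K. \<mu> v * (norm (v - xc))\<^sup>2 - 2 * (\<mu> v * ((v - xc) \<bullet> q)) + \<mu> v * (q \<bullet> q))"
    by (simp add: power2_norm_eq_inner inner_diff_left inner_diff_right algebra_simps inner_commute)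
  also have "\<dots> = (\<Sum>v\<in>K. \<mu> v * (norm (v - xc))\<^sup>2) - 2 * (q \<bullet> q) + (\<Sum>v\<in>K. \<mu> v) * (q \<bullet> q)"
    by (simp only: sum.distrib sum_subtractf cross flip: sum_distrib_left sum_distrib_right)
  also have "\<dots> = (\<Sum>v\<in>K. \<mu> v * (norm (v - xc))\<^sup>2) - (norm q)\<^sup>2"
    using assms(2) by (simp add: power2_norm_eq_inner)
  finally show ?thesis unfolding q by simp
qed

definition paraboloid :: "real \<Rightarrow> real \<Rightarrow> 'a::real_normed_vector \<Rightarrow> 'a \<Rightarrow> real" where
  "paraboloid c A xc x = c - A * (norm (x - xc))\<^sup>2"

lemma paraboloid_parallelogram:
  fixes z d :: "'a::real_inner"
  shows "paraboloid c A xc (z + d) + paraboloid c A xc (z - d)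
           = 2 * paraboloid c A xc z - 2 * A * (norm d)\<^sup>2"
proof -
  have "(norm (z + d - xc))\<^sup>2 + (norm (z - d - xc))\<^sup>2 = 2 * (norm (z - xc))\<^sup>2 + 2 * (norm d)\<^sup>2"
    by (simp add: power2_norm_eq_inner inner_add_left inner_add_right inner_diff_left
        inner_diff_right inner_commute algebra_simps)
  from arg_cong[OF this, of "\<lambda>t. A * t"] show ?thesis
    unfolding paraboloid_def by (simp add: algebra_simps)
qed

(* Functions in V_h vanish outside the mesh, hence the sign condition there. *)
lemma interp_paraboloid_le:
  assumes sm: "simplicial_mesh T" and "0 \<le> A"
    and outside: "y \<notin> mesh_union T \<Longrightarrow> 0 \<le> paraboloid c A xc y"
  shows "interp T (paraboloid c A xc) y \<le> paraboloid c A xc y"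
proof (cases "y \<in> mesh_union T")
  case True
  then obtain K \<mu> where K: "K \<in> T" "\<forall>v\<in>K. 0 \<le> \<mu> v" "sum \<mu> K = 1" "y = (\<Sum>v\<in>K. \<mu> v *\<^sub>R v)"
    using mesh_union_convex_comb[OF sm] by blast
  have "interp T (paraboloid c A xc) y = (\<Sum>v\<in>K. \<mu> v * interp T (paraboloid c A xc) v)"
    using Vh_convex_comb[OF interp_in_Vh[OF sm] K(1-3)] K(4) by simp
  also have "\<dots> = (\<Sum>v\<in>K. \<mu> v * (c - A * (norm (v - xc))\<^sup>2))"
    using simplex_subset_nodes[OF K(1)]
    by (intro sum.cong) (auto simp: interp_nodes[OF sm] paraboloid_def)
  also have "\<dots> = c - A * (\<Sum>v\<in>K. \<mu> v * (norm (v - xc))\<^sup>2)"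
    unfolding right_diff_distrib sum_subtractf
    by (simp add: K(3) mult.left_commute flip: sum_distrib_left sum_distrib_right)
  also have "\<dots> \<le> c - A * (norm (y - xc))\<^sup>2"
    using norm_convex_comb_sq_le[OF K(2,3), of xc] K(4) \<open>0 \<le> A\<close> by (simp add: mult_left_mono)
  finally show ?thesis unfolding paraboloid_def .
next
  case False
  then show ?thesis using outside interp_in_Vh[OF sm] unfolding Vh_def by simp
qed

lemma neg_disc_inf_lap_paraboloid_ge:
  fixes S :: "'a::euclidean_space set"
  assumes sm: "simplicial_mesh T" and "0 < \<epsilon>" "0 \<le> A"
    and S: "finite S" "S \<noteq> {}" "\<forall>v\<in>S. - v \<in> S" "S \<subseteq> sphere 0 1"
    and z: "z \<in> nodes T"
    and below: "\<And>y. y \<in> stencil \<epsilon> S z \<Longrightarrow> interp T (paraboloid c A xc) y \<le> paraboloid c A xc y"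
  shows "A \<le> neg_disc_inf_lap T \<epsilon> S (paraboloid c A xc) z"
proof -
  define p where "p = paraboloid c A xc"
  define F where "F = interp T p"
  define St where "St = stencil \<epsilon> S z"
  have St: "z \<in> St" "\<And>v. v \<in> S \<Longrightarrow> z + \<epsilon> *\<^sub>R v \<in> St" "finite St"
    using S(1) unfolding St_def stencil_def by auto
  have pair: "p (z + \<epsilon> *\<^sub>R v) + p (z + \<epsilon> *\<^sub>R (- v)) = 2 * p z - 2 * A * \<epsilon>\<^sup>2" if "v \<in> S" for v
    using paraboloid_parallelogram[of c A xc z "\<epsilon> *\<^sub>R v"] S(4) that \<open>0 < \<epsilon>\<close>
    unfolding p_def by auto
  have Min_le: "Min (F ` St) \<le> p y" if "y \<in> St" for y
  proof -
    have "Min (F ` St) \<le> F y" using St(3) that by simp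
    also have "F y \<le> p y" using below that unfolding F_def p_def St_def by simp
    finally show ?thesis .
  qed
  have "Max (F ` St) \<in> F ` St" using St(1,3) by (intro Max_in) auto
  then obtain y where y: "y \<in> St" "Max (F ` St) = F y" by blast
  \<comment> \<open>A maximising stencil point and its reflection through z are paired by the parallelogram law.\<close>
  have "Max (F ` St) + Min (F ` St) \<le> 2 * p z - A * \<epsilon>\<^sup>2"
  proof (cases "y = z")
    case True
    obtain v where v: "v \<in> S" using S(2) by blast
    have "Max (F ` St) = p z" using y True interp_nodes[OF sm z] unfolding F_def by simp
    moreover have "2 * Min (F ` St) \<le> 2 * p z - 2 * A * \<epsilon>\<^sup>2"
      using Min_le[OF St(2)[OF v]] Min_le[OF St(2)[OF bspec[OF S(3) v]]] pair[OF v] by linarith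
    moreover have "0 \<le> A * \<epsilon>\<^sup>2" using \<open>0 \<le> A\<close> by simp
    ultimately show ?thesis by linarith
  next
    case False
    then obtain v where v: "v \<in> S" "y = z + \<epsilon> *\<^sub>R v"
      using y(1) unfolding St_def stencil_def by blast
    have "Max (F ` St) \<le> p (z + \<epsilon> *\<^sub>R v)" using y below v(2) unfolding F_def p_def St_def by simp
    moreover have "Min (F ` St) \<le> p (z + \<epsilon> *\<^sub>R (- v))"
      using Min_le[OF St(2)[OF bspec[OF S(3) v(1)]]] .
    moreover have "0 \<le> A * \<epsilon>\<^sup>2" using \<open>0 \<le> A\<close> by simp
    ultimately show ?thesis using pair[OF v(1)] by linarith
  qed
  then show ?thesis
    using \<open>0 < \<epsilon>\<close> interp_nodes[OF sm z]
    unfolding neg_disc_inf_lap_def by (simp add: F_def p_def St_def pos_le_divide_eq)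
qed

section \<open>Comparison principle for the discrete operator\<close>

lemma neg_disc_inf_lap_mono_at_max:
  assumes sm: "simplicial_mesh T" and "finite S"
    and max: "\<And>y. y \<in> nodes T \<Longrightarrow> u y - w y \<le> u z - w z" and "0 \<le> u z - w z"
  shows "neg_disc_inf_lap T \<epsilon> S w z \<le> neg_disc_inf_lap T \<epsilon> S u z"
proof -
  define m where "m = u z - w z"
  have shift: "interp T u y \<le> interp T w y + m" for y
  proof -
    have "interp T (\<lambda>x. u x - w x) y \<in> {..m}"
    proof (rule Vh_mem_convex[OF sm interp_in_Vh[OF sm]])
      show "interp T (\<lambda>x. u x - w x) v \<in> {..m}" if "v \<in> nodes T" for v
        using max[OF that] that unfolding m_def by (simp add: interp_nodes[OF sm])
      show "0 \<in> {..m}" using assms(4) unfolding m_def by simp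
    qed (simp add: convex_real_interval)
    then show ?thesis by (simp add: interp_diff)
  qed
  define St where "St = stencil \<epsilon> S z"
  have St: "finite St" "St \<noteq> {}" using assms(2) unfolding St_def stencil_def by auto
  have "Max (interp T u ` St) \<in> interp T u ` St" using St by (intro Max_in) auto
  then obtain y where y: "y \<in> St" "Max (interp T u ` St) = interp T u y" by blast
  have "interp T w y \<le> Max (interp T w ` St)" using St(1) y(1) by simp
  then have Max: "Max (interp T u ` St) \<le> Max (interp T w ` St) + m"
    using y(2) shift[of y] by linarith
  have "Min (interp T w ` St) \<in> interp T w ` St" using St by (intro Min_in) auto
  then obtain y' where y': "y' \<in> St" "Min (interp T w ` St) = interp T w y'" by blast
  have "Min (interp T u ` St) \<le> interp T u y'" using St(1) y'(1) by simp
  then have Min: "Min (interp T u ` St) \<le> Min (interp T w ` St) + m"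
    using y'(2) shift[of y'] by linarith
  have "2 * w z - Max (interp T w ` St) - Min (interp T w ` St)
        \<le> 2 * u z - Max (interp T u ` St) - Min (interp T u ` St)"
    using Max Min unfolding m_def by linarith
  then show ?thesis unfolding neg_disc_inf_lap_def St_def by (simp add: divide_right_mono)
qed

lemma neg_disc_inf_lap_uminus:
  assumes "finite S"
  shows "neg_disc_inf_lap T \<epsilon> S (\<lambda>x. - u x) z = - neg_disc_inf_lap T \<epsilon> S u z"
proof -
  define St where "St = stencil \<epsilon> S z"
  have St: "finite St" "St \<noteq> {}" using assms unfolding St_def stencil_def by auto
  have "interp T (\<lambda>x. - u x) ` St = uminus ` interp T u ` St"
    by (auto simp: interp_uminus)
  then show ?thesis
    using St unfolding neg_disc_inf_lap_def St_def[symmetric]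
    by (simp flip: minus_Max_eq_Min minus_Min_eq_Max add: minus_divide_left)
qed

lemma stencil_norm_le:
  assumes "S \<subseteq> sphere 0 1" "0 \<le> \<epsilon>" "y \<in> stencil \<epsilon> S z"
  shows "norm (y - z) \<le> \<epsilon>"
  using assms unfolding stencil_def by auto

lemma ex_max_on_finite:
  fixes f :: "'a \<Rightarrow> 'b::linorder"
  assumes "finite S" "S \<noteq> {}"
  obtains x where "x \<in> S" "\<And>y. y \<in> S \<Longrightarrow> f y \<le> f x"
proof -
  have "Max (f ` S) \<in> f ` S" using assms by simp
  then obtain x where x: "x \<in> S" "f x = Max (f ` S)" by auto
  show ?thesis
    by (rule that[OF x(1)]) (simp add: x(2) assms(1))
qed

lemma neg_disc_inf_lap_comparison:
  fixes T :: "'a::euclidean_space set set"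
  assumes sm: "simplicial_mesh T" and "0 < \<epsilon>"
    and S: "finite S" "S \<noteq> {}" "\<forall>v\<in>S. - v \<in> S" "S \<subseteq> sphere 0 1"
    and I: "I \<subseteq> nodes T" and R: "\<And>z. z \<in> nodes T \<Longrightarrow> norm (z - x0) + \<epsilon> \<le> R"
    and "0 \<le> G" "0 \<le> A"
    and interior: "\<And>z. z \<in> I \<Longrightarrow> neg_disc_inf_lap T \<epsilon> S u z < A"
    and boundary: "\<And>z. z \<in> nodes T - I \<Longrightarrow> u z \<le> G"
    and z: "z \<in> nodes T"
  shows "u z \<le> G + A * R\<^sup>2"
proof (rule ccontr)
  assume contra: "\<not> ?thesis"
  define w where "w = paraboloid (G + A * R\<^sup>2) A x0"
  have w_le: "w y \<le> G + A * R\<^sup>2" for y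
    using \<open>0 \<le> A\<close> unfolding w_def paraboloid_def by simp
  have w_ge: "G \<le> w y" if "norm (y - x0) \<le> R" for y
    using that \<open>0 \<le> A\<close> unfolding w_def paraboloid_def
    by (simp add: mult_left_mono power_mono)
  obtain z0 where z0: "z0 \<in> nodes T" "\<And>y. y \<in> nodes T \<Longrightarrow> u y - w y \<le> u z0 - w z0"
    using ex_max_on_finite[OF finite_nodes[OF sm] nodes_nonempty[OF sm], of "\<lambda>y. u y - w y"]
    by blast
  have pos: "0 < u z0 - w z0"
    using z0(2)[OF z] w_le[of z] contra by linarith
  have "norm (z0 - x0) \<le> R" using R[OF z0(1)] \<open>0 < \<epsilon>\<close> by linarith
  then have "z0 \<in> I"
    using boundary[of z0] w_ge[of z0] z0(1) pos by fastforce
  have near: "norm (y - x0) \<le> R" if "y \<in> stencil \<epsilon> S z0" for y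
    using stencil_norm_le[OF S(4) _ that] \<open>0 < \<epsilon>\<close> norm_triangle_ineq[of "y - z0" "z0 - x0"]
      R[OF z0(1)] by simp
  have "interp T w y \<le> w y" if "y \<in> stencil \<epsilon> S z0" for y
  proof -
    have "0 \<le> w y" using w_ge[OF near[OF that]] \<open>0 \<le> G\<close> by linarith
    then show ?thesis
      using interp_paraboloid_le[OF sm \<open>0 \<le> A\<close>, of y] unfolding w_def by blast
  qed
  then have "A \<le> neg_disc_inf_lap T \<epsilon> S w z0"
    unfolding w_def
    by (rule neg_disc_inf_lap_paraboloid_ge[OF sm \<open>0 < \<epsilon>\<close> \<open>0 \<le> A\<close> S z0(1)])
  also have "\<dots> \<le> neg_disc_inf_lap T \<epsilon> S u z0"
  proof (rule neg_disc_inf_lap_mono_at_max[OF sm S(1)])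
    show "u y - w y \<le> u z0 - w z0" if "y \<in> nodes T" for y using z0(2) that .
    show "0 \<le> u z0 - w z0" using pos by simp
  qed
  also have "\<dots> < A" using interior[OF \<open>z0 \<in> I\<close>] .
  finally show False by simp
qed

lemma neg_disc_inf_lap_nodal_bound:
  fixes T :: "'a::euclidean_space set set"
  assumes sm: "simplicial_mesh T" and "0 < \<epsilon>"
    and S: "finite S" "S \<noteq> {}" "\<forall>v\<in>S. - v \<in> S" "S \<subseteq> sphere 0 1"
    and I: "I \<subseteq> nodes T" and R: "\<And>z. z \<in> nodes T \<Longrightarrow> norm (z - x0) + \<epsilon> \<le> R"
    and "0 \<le> G" "0 \<le> F"
    and interior: "\<And>z. z \<in> I \<Longrightarrow> \<bar>neg_disc_inf_lap T \<epsilon> S u z\<bar> \<le> F"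
    and boundary: "\<And>z. z \<in> nodes T - I \<Longrightarrow> \<bar>u z\<bar> \<le> G"
    and z: "z \<in> nodes T"
  shows "\<bar>u z\<bar> \<le> G + F * R\<^sup>2"
proof -
  have "0 < R" using R[OF z] norm_ge_zero[of "z - x0"] \<open>0 < \<epsilon>\<close> by linarith
  have one_sided: "v z \<le> G + F * R\<^sup>2"
    if v_interior: "\<And>y. y \<in> I \<Longrightarrow> neg_disc_inf_lap T \<epsilon> S v y \<le> F"
      and v_boundary: "\<And>y. y \<in> nodes T - I \<Longrightarrow> v y \<le> G" for v
  \<comment> \<open>The comparison principle needs a strict bound on the operator, so let A decrease to F.\<close>
  proof (rule dense_ge)
    fix b assume "G + F * R\<^sup>2 < b"
    define A where "A = (b - G) / R\<^sup>2"
    have "F < A" using \<open>G + F * R\<^sup>2 < b\<close> \<open>0 < R\<close> unfolding A_def by (simp add: field_simps)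
    have "v z \<le> G + A * R\<^sup>2"
    proof (rule neg_disc_inf_lap_comparison[OF sm \<open>0 < \<epsilon>\<close> S I R \<open>0 \<le> G\<close>,
          where u = v and z = z and A = A])
      show "0 \<le> A" using \<open>F < A\<close> \<open>0 \<le> F\<close> by simp
      show "neg_disc_inf_lap T \<epsilon> S v y < A" if "y \<in> I" for y
        using v_interior[OF that] \<open>F < A\<close> by simp
      show "v y \<le> G" if "y \<in> nodes T - I" for y
        using v_boundary[OF that] .
    qed (use z in auto)
    also have "\<dots> = b" using \<open>0 < R\<close> unfolding A_def by simp
    finally show "v z \<le> b" .
  qed
  have "u z \<le> G + F * R\<^sup>2"
    by (rule one_sided) (use interior boundary in \<open>auto simp: abs_le_iff\<close>)
  moreover have "- u z \<le> G + F * R\<^sup>2"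
    by (rule one_sided[where v = "\<lambda>x. - u x"])
      (use interior boundary in \<open>auto simp: abs_le_iff neg_disc_inf_lap_uminus[OF S(1)]\<close>)
  ultimately show ?thesis by (simp add: abs_le_iff)
qed

lemma inner_set_antimono: "r \<le> s \<Longrightarrow> inner_set Om s \<subseteq> inner_set Om r"
  unfolding inner_set_def by auto

lemma inner_set_translate:
  fixes Om :: "'a::euclidean_space set"
  assumes "x \<in> inner_set Om r" "norm d < r"
  shows "x + d \<in> inner_set Om (r - norm d)"
proof -
  have x: "x \<in> Om" "r < infdist x (frontier Om)" using assms(1) unfolding inner_set_def by auto
  have "x + d \<in> Om"
  proof (rule ccontr)
    assume "x + d \<notin> Om"
    then have "closed_segment x (x + d) \<inter> frontier Om \<noteq> {}"
      using x(1) by (intro connected_Int_frontier) auto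
    then obtain p where p: "p \<in> closed_segment x (x + d)" "p \<in> frontier Om" by blast
    have "infdist x (frontier Om) \<le> dist x p" using p(2) by (rule infdist_le)
    also have "\<dots> \<le> dist x (x + d)" using dist_in_closed_segment[OF p(1)] by (simp add: dist_commute)
    also have "\<dots> = norm d" by (simp add: dist_norm)
    finally show False using x(2) assms(2) by linarith
  qed
  moreover have "infdist x (frontier Om) \<le> infdist (x + d) (frontier Om) + dist x (x + d)"
    by (rule infdist_triangle)
  ultimately show ?thesis using x(2) unfolding inner_set_def by (simp add: dist_norm)
qed

lemma bnodes_nonempty:
  fixes T :: "'a::euclidean_space set set"
  assumes sm: "simplicial_mesh T" and fine: "inner_set Om (meshsize T) \<subseteq> mesh_dom T"
    and "meshsize T \<le> \<epsilon>"
  shows "bnodes Om T \<epsilon> \<noteq> {}"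
proof
  assume "bnodes Om T \<epsilon> = {}"
  then have inner: "nodes T \<subseteq> inner_set Om (2 * \<epsilon>)" unfolding bnodes_def inodes_def by blast
  have "0 < \<epsilon>" using meshsize_pos[OF sm] \<open>meshsize T \<le> \<epsilon>\<close> by linarith
  obtain e :: 'a where e: "e \<in> Basis" using nonempty_Basis by blast
  obtain z where z: "z \<in> nodes T" "\<And>v. v \<in> nodes T \<Longrightarrow> e \<bullet> v \<le> e \<bullet> z"
    using ex_max_on_finite[OF finite_nodes[OF sm] nodes_nonempty[OF sm], of "\<lambda>v. e \<bullet> v"] by blast
  define y where "y = z + (\<epsilon> / 2) *\<^sub>R e"
  have "y \<in> inner_set Om (2 * \<epsilon> - \<epsilon> / 2)"
    using inner_set_translate[OF subsetD[OF inner z(1)], of "(\<epsilon> / 2) *\<^sub>R e"] e \<open>0 < \<epsilon>\<close>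
    unfolding y_def by simp
  then have "y \<in> mesh_union T"
    using inner_set_antimono[of "meshsize T" "2 * \<epsilon> - \<epsilon> / 2" Om] \<open>meshsize T \<le> \<epsilon>\<close> \<open>0 < \<epsilon>\<close> fine
      interior_subset[of "mesh_union T"] unfolding mesh_dom_def by auto
  also have "\<dots> \<subseteq> convex hull (nodes T)"
    unfolding mesh_union_def nodes_def by (auto intro: hull_mono[THEN subsetD])
  also have "\<dots> \<subseteq> {x. e \<bullet> x \<le> e \<bullet> z}"
    using z(2) by (intro hull_minimal) (auto simp: convex_halfspace_le)
  finally have "e \<bullet> y \<le> e \<bullet> z" by simp
  then show False using e \<open>0 < \<epsilon>\<close> unfolding y_def by (simp add: inner_add_right)
qed

lemma sphere_netD:
  assumes "sphere_net \<theta> (S :: 'a::euclidean_space set)"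
  shows "finite S" "S \<noteq> {}" "\<forall>v\<in>S. - v \<in> S" "S \<subseteq> sphere 0 1"
proof -
  obtain e :: 'a where "e \<in> Basis" using nonempty_Basis by blast
  then have "e \<in> sphere 0 1" by simp
  then show "S \<noteq> {}" using assms unfolding sphere_net_def by blast
qed (use assms in \<open>auto simp: sphere_net_def\<close>)

lemma dist_nodes_le_diameter:
  assumes "bounded Om" "simplicial_mesh T" "mesh_dom T \<subseteq> Om" "z \<in> nodes T" "z' \<in> nodes T"
  shows "dist z z' \<le> diameter Om"
proof -
  have "nodes T \<subseteq> closure Om"
    using nodes_subset_mesh_union mesh_union_subset_closure_mesh_dom[OF assms(2)]
      closure_mono[OF assms(3)] by blast
  then have "dist z z' \<le> diameter (closure Om)"
    using assms(4,5) bounded_closure[OF assms(1)] by (intro diameter_bounded_bound) auto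
  then show ?thesis using diameter_closure[OF assms(1)] by simp
qed

lemma inodes_subset_mesh_dom:
  assumes "simplicial_mesh T" "inner_set Om (meshsize T) \<subseteq> mesh_dom T" "meshsize T \<le> \<epsilon>"
  shows "inodes Om T \<epsilon> \<subseteq> mesh_dom T"
  using inner_set_antimono[of "meshsize T" "2 * \<epsilon>" Om] meshsize_pos[OF assms(1)] assms(2,3)
  unfolding inodes_def by auto

lemma supnorm_discrete_solution_le:
  fixes Om :: "'a::euclidean_space set"
  assumes "bounded Om"
    and sm: "simplicial_mesh T" and fine: "inner_set Om (meshsize T) \<subseteq> mesh_dom T"
    and "mesh_dom T \<subseteq> Om" "meshsize T \<le> \<epsilon>" "\<epsilon> \<le> diameter Om" and net: "sphere_net \<theta> S"
    and "bounded (f ` Om)" and "u \<in> Vh T"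
    and equation: "\<forall>z\<in>inodes Om T \<epsilon>. neg_disc_inf_lap T \<epsilon> S u z = f z"
    and boundary: "\<forall>z\<in>bnodes Om T \<epsilon>. u z = g z"
  shows "supnorm_on (mesh_dom T) u
           \<le> (2 * diameter Om)\<^sup>2 * supnorm_on (mesh_dom T) f + Max ((\<lambda>z. \<bar>g z\<bar>) ` bnodes Om T \<epsilon>)"
proof -
  have "0 < \<epsilon>" using meshsize_pos[OF sm] \<open>meshsize T \<le> \<epsilon>\<close> by linarith
  obtain x0 where x0: "x0 \<in> nodes T" using nodes_nonempty[OF sm] by blast
  have R: "norm (z - x0) + \<epsilon> \<le> 2 * diameter Om" if "z \<in> nodes T" for z
    using dist_nodes_le_diameter[OF \<open>bounded Om\<close> sm \<open>mesh_dom T \<subseteq> Om\<close> that x0]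
      \<open>\<epsilon> \<le> diameter Om\<close> by (simp add: dist_norm)
  define G where "G = Max ((\<lambda>z. \<bar>g z\<bar>) ` bnodes Om T \<epsilon>)"
  have G: "\<bar>g z\<bar> \<le> G" if "z \<in> bnodes Om T \<epsilon>" for z
    using that finite_nodes[OF sm] unfolding G_def bnodes_def by simp
  have "0 \<le> G" using bnodes_nonempty[OF sm fine \<open>meshsize T \<le> \<epsilon>\<close>] G by force
  define F where "F = supnorm_on (mesh_dom T) f"
  have f_bounded: "bounded (f ` mesh_dom T)"
    using \<open>bounded (f ` Om)\<close> \<open>mesh_dom T \<subseteq> Om\<close> by (meson bounded_subset image_mono)
  have F: "\<bar>f z\<bar> \<le> F" if "z \<in> inodes Om T \<epsilon>" for z
    using abs_le_supnorm_on[OF _ f_bounded] inodes_subset_mesh_dom[OF sm fine \<open>meshsize T \<le> \<epsilon>\<close>] that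
    unfolding F_def by blast
  obtain x where "x \<in> mesh_dom T" using mesh_dom_nonempty[OF sm] by blast
  then have "0 \<le> F" using abs_le_supnorm_on[OF _ f_bounded] unfolding F_def by force
  have "\<bar>u z\<bar> \<le> G + F * (2 * diameter Om)\<^sup>2" if "z \<in> nodes T" for z
  proof (rule neg_disc_inf_lap_nodal_bound[OF sm \<open>0 < \<epsilon>\<close> sphere_netD[OF net] _ R \<open>0 \<le> G\<close> \<open>0 \<le> F\<close>])
    show "inodes Om T \<epsilon> \<subseteq> nodes T" unfolding inodes_def by blast
    show "\<bar>neg_disc_inf_lap T \<epsilon> S u y\<bar> \<le> F" if "y \<in> inodes Om T \<epsilon>" for y
      using equation F that by simp
    show "\<bar>u y\<bar> \<le> G" if "y \<in> nodes T - inodes Om T \<epsilon>" for y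
      using boundary G that unfolding bnodes_def by simp
  qed (use that in auto)
  then have "supnorm_on (mesh_dom T) u \<le> G + F * (2 * diameter Om)\<^sup>2"
    by (rule supnorm_on_Vh_le[OF sm \<open>u \<in> Vh T\<close>])
  then show ?thesis unfolding F_def G_def by (simp add: algebra_simps)
qed

theorem lemma3p4:
  fixes Om :: "'a::euclidean_space set"
  assumes "open Om" and "connected Om" and "bounded Om" and "Om \<noteq> {}"
    and "continuous_boundary Om"
  shows "\<exists>C. \<forall>(T :: 'a set set) (\<epsilon> :: real) (\<theta> :: real) (S :: 'a set)
              (f :: 'a \<Rightarrow> real) (g :: 'a \<Rightarrow> real) (gt :: real \<Rightarrow> 'a \<Rightarrow> real) (u :: 'a \<Rightarrow> real).
     simplicial_mesh T \<and>
     inner_set Om (meshsize T) \<subseteq> mesh_dom T \<and> mesh_dom T \<subseteq> Om \<and>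
     meshsize T \<le> \<epsilon> \<and> \<epsilon> \<le> diameter Om \<and> 0 < \<theta> \<and> \<theta> \<le> 1 \<and>
     sphere_net \<theta> S \<and>
     \<comment> \<open>(RHS.1)\<close>
     continuous_on Om f \<and> bounded (f ` Om) \<and>
     \<comment> \<open>(RHS.2)\<close>
     ((\<exists>c<0. \<forall>x\<in>Om. f x \<le> c) \<or> (\<exists>c>0. \<forall>x\<in>Om. f x \<ge> c) \<or> (\<forall>x\<in>Om. f x = 0)) \<and>
     \<comment> \<open>(BC.1)\<close>
     continuous_on (frontier Om) g \<and>
     \<comment> \<open>(BC.2)\<close>
     (\<forall>e>0. continuous_on (closure Om) (gt e)) \<and>
     (\<forall>\<alpha>. 0 \<le> \<alpha> \<and> \<alpha> \<le> 1 \<and> holder_on \<alpha> (frontier Om) g \<longrightarrow>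
        (\<forall>e>0. holder_on \<alpha> (closure Om) (gt e)) \<and>
        (\<exists>C'. \<forall>e>0. \<forall>x\<in>frontier Om. \<bar>g x - gt e x\<bar> \<le> C' * e powr \<alpha>)) \<and>
     \<comment> \<open>(M.1) in case (RHS.2b)\<close>
     ((\<forall>x\<in>Om. f x = 0) \<longrightarrow> cond_M1 Om T \<epsilon> S) \<and>
     \<comment> \<open>u solves the discrete problem\<close>
     u \<in> Vh T \<and>
     (\<forall>z\<in>inodes Om T \<epsilon>. neg_disc_inf_lap T \<epsilon> S u z = f z) \<and>
     (\<forall>z\<in>bnodes Om T \<epsilon>. u z = gt \<epsilon> z)
     \<longrightarrow> supnorm_on (mesh_dom T) u
           \<le> C * supnorm_on (mesh_dom T) f + Max ((\<lambda>z. \<bar>gt \<epsilon> z\<bar>) ` bnodes Om T \<epsilon>)"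
  by (intro exI[of _ "(2 * diameter Om)\<^sup>2"] allI impI, elim conjE,
      rule supnorm_discrete_solution_le[OF \<open>bounded Om\<close>]; assumption)

end
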